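(* Let $S_{\rm tr}, S_1,\dots,S_m$ be the output of Algorithm 2 (defined in the context) and set $\gamma := \sum_{i=1}^m f_i(S_i)$. If every $f_i$ is monotone and submodular, then $$\sum_{i=1}^m f_i(S_{\rm tr}\cup S_i)\;\ge\;\max\Bigl\{\gamma,\;(1-1/e)(\mathrm{OPT}-2\gamma)+\gamma\Bigr\}.$$ Consequently $\sum_{i=1}^m f_i(S_{\rm tr}\cup S_i)\ge \tfrac12\,\mathrm{OPT}$ for every value of $\gamma$.
   Context: $V$ is a finite ground set with $|V|=n$; $k,l$ are integers with $1\le l<k\le n$. For $i=1,\dots,m$, $f_i:2^V\to\mathbb{R}_{\ge 0}$ is a set function; $f_i$ is monotone if $A\subseteq B\Rightarrow f_i(A)\le f_i(B)$ and submodular if $f_i(A)+f_i(B)\ge f_i(A\cup B)+f_i(A\cap B)$ for all $A,B\subseteq V$. Write $\Delta_i(e\mid S)=f_i(S\cup\{e\})-f_i(S)$. Define $$\mathrm{OPT}=\max_{S_{\rm tr}\subseteq V,\,|S_{\rm tr}|\le l}\;\sum_{i=1}^m\;\max_{S_i\subseteq V,\,|S_i|\le k-l} f_i(S_{\rm tr}\cup S_i).$$ Algorithm 2: start with $S_{\rm tr}=S_1=\dots=S_m=\emptyset$. Phase 1: for each $i=1,\dots,m$ and $t=1,\dots,k-l$, choose $e_i^*\in\arg\max_{e\in V\setminus S_i}\Delta_i(e\mid S_i)$ and set $S_i\leftarrow S_i\cup\{e_i^*\}$. Phase 2: for $t=1,\dots,l$, choose $e^*\in\arg\max_{e\in V\setminus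 S_{\rm tr}}\sum_{i=1}^m\Delta_i(e\mid S_{\rm tr}\cup S_i)$ and set $S_{\rm tr}\leftarrow S_{\rm tr}\cup\{e^*\}$. Output $S_{\rm tr},S_1,\dots,S_m$. Ties in all argmax's are broken arbitrarily. *)

theory Defs
  imports Complex_Main
begin

definition monotone_sf :: "'a set \<Rightarrow> ('a set \<Rightarrow> real) \<Rightarrow> bool" where
  "monotone_sf V f \<longleftrightarrow> (\<forall>A B. A \<subseteq> B \<and> B \<subseteq> V \<longrightarrow> f A \<le> f B)"

definition submodular_sf :: "'a set \<Rightarrow> ('a set \<Rightarrow> real) \<Rightarrow> bool" where
  "submodular_sf V f \<longleftrightarrow>
     (\<forall>A B. A \<subseteq> V \<and> B \<subseteq> V \<longrightarrow> f A + f B \<ge> f (A \<union> B) + f (A \<inter> B))"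

definition nonneg_sf :: "'a set \<Rightarrow> ('a set \<Rightarrow> real) \<Rightarrow> bool" where
  "nonneg_sf V f \<longleftrightarrow> (\<forall>A. A \<subseteq> V \<longrightarrow> 0 \<le> f A)"

definition marg :: "('a set \<Rightarrow> real) \<Rightarrow> 'a \<Rightarrow> 'a set \<Rightarrow> real" where
  "marg f e S = f (insert e S) - f S"

definition greedy_run :: "'a set \<Rightarrow> ('a set \<Rightarrow> 'a \<Rightarrow> real) \<Rightarrow> nat \<Rightarrow> (nat \<Rightarrow> 'a set) \<Rightarrow> bool" where
  "greedy_run V gain r S \<longleftrightarrow> S 0 = {} \<and>
     (\<forall>t<r. \<exists>e \<in> V - S t. (\<forall>e' \<in> V - S t. gain (S t) e' \<le> gain (S t) e) \<and>
                            S (Suc t) = insert e (S t))"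

definition OPT :: "'a set \<Rightarrow> nat \<Rightarrow> (nat \<Rightarrow> 'a set \<Rightarrow> real) \<Rightarrow> nat \<Rightarrow> nat \<Rightarrow> real" where
  "OPT V m f k l = Max ((\<lambda>T. \<Sum>i=1..m. Max ((\<lambda>S. f i (T \<union> S)) ` {S. S \<subseteq> V \<and> card S \<le> k - l}))
                        ` {T. T \<subseteq> V \<and> card T \<le> l})"

end

theory Submission
  imports Defs
begin

text \<open>Let \<gamma> = \<Sum>_i f_i(S_i) and G(T) = \<Sum>_i f_i(T \<union> S_i). Then G is monotone submodular with
  G({}) = \<gamma>, and phase 2 is the plain greedy algorithm for G under the cardinality bound l; so
  G(S_tr) \<ge> \<gamma> and, by the classical greedy analysis, G(S_tr) - \<gamma> \<ge> (1 - 1/e)(G(T) - \<gamma>) for the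
  shared part T of an optimal solution. Each S_i is itself a greedy solution of size k - l, so
  adding at most k - l further elements to it gains at most f_i(S_i); with submodularity this
  gives OPT \<le> G(T) + \<gamma>. The OPT/2 bound follows from 1 - 1/e \<ge> 1/2.\<close>

lemma monotone_sfD: "monotone_sf V h \<Longrightarrow> A \<subseteq> B \<Longrightarrow> B \<subseteq> V \<Longrightarrow> h A \<le> h B"
  unfolding monotone_sf_def by blast

lemma submodular_sfD:
  "submodular_sf V h \<Longrightarrow> A \<subseteq> V \<Longrightarrow> B \<subseteq> V \<Longrightarrow> h (A \<union> B) + h (A \<inter> B) \<le> h A + h B"
  unfolding submodular_sf_def by blast

lemma monotone_sf_union_const:
  assumes "monotone_sf V h" "A \<subseteq> V"
  shows "monotone_sf V (\<lambda>T. h (T \<union> A))"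
  unfolding monotone_sf_def using assms by (blast intro: monotone_sfD)

lemma submodular_sf_union_const:
  assumes "submodular_sf V h" "A \<subseteq> V"
  shows "submodular_sf V (\<lambda>T. h (T \<union> A))"
  unfolding submodular_sf_def
proof (intro allI impI)
  fix B C assume "B \<subseteq> V \<and> C \<subseteq> V"
  then have "h ((B \<union> A) \<union> (C \<union> A)) + h ((B \<union> A) \<inter> (C \<union> A)) \<le> h (B \<union> A) + h (C \<union> A)"
    using assms by (intro submodular_sfD) auto
  moreover have "(B \<union> A) \<union> (C \<union> A) = B \<union> C \<union> A" "(B \<union> A) \<inter> (C \<union> A) = B \<inter> C \<union> A"
    by auto
  ultimately show "h (B \<union> C \<union> A) + h (B \<inter> C \<union> A) \<le> h (B \<union> A) + h (C \<union> A)"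
    by simp
qed

lemma monotone_sf_sum:
  "(\<And>i. i \<in> I \<Longrightarrow> monotone_sf V (h i)) \<Longrightarrow> monotone_sf V (\<lambda>T. \<Sum>i\<in>I. h i T)"
  unfolding monotone_sf_def by (blast intro: sum_mono)

lemma submodular_sf_sum:
  "(\<And>i. i \<in> I \<Longrightarrow> submodular_sf V (h i)) \<Longrightarrow> submodular_sf V (\<lambda>T. \<Sum>i\<in>I. h i T)"
  unfolding submodular_sf_def by (auto simp flip: sum.distrib intro!: sum_mono)

lemma marg_nonneg: "monotone_sf V h \<Longrightarrow> e \<in> V \<Longrightarrow> X \<subseteq> V \<Longrightarrow> 0 \<le> marg h e X"
  unfolding marg_def by (auto dest: monotone_sfD[of V h X "insert e X"])

lemma marg_antimono:
  assumes mo: "monotone_sf V h" and sm: "submodular_sf V h"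
    and AB: "A \<subseteq> B" "B \<subseteq> V" and e: "e \<in> V"
  shows "marg h e B \<le> marg h e A"
proof (cases "e \<in> B")
  case True
  then show ?thesis using marg_nonneg[OF mo e, of A] AB by (simp add: marg_def insert_absorb)
next
  case False
  have "h (insert e A \<union> B) + h (insert e A \<inter> B) \<le> h (insert e A) + h B"
    using AB e by (intro submodular_sfD[OF sm]) auto
  moreover have "insert e A \<union> B = insert e B" "insert e A \<inter> B = A"
    using AB False by auto
  ultimately show ?thesis by (simp add: marg_def)
qed

lemma diff_union_le_sum_marg:
  assumes mo: "monotone_sf V h" and sm: "submodular_sf V h"
  shows "finite X \<Longrightarrow> X \<subseteq> V \<Longrightarrow> S \<subseteq> V \<Longrightarrow> h (S \<union> X) - h S \<le> (\<Sum>x\<in>X. marg h x S)"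
proof (induction X rule: finite_induct)
  case empty then show ?case by simp
next
  case (insert x F)
  have "marg h x (S \<union> F) \<le> marg h x S"
    using insert by (intro marg_antimono[OF mo sm]) auto
  moreover have "h (S \<union> insert x F) = h (S \<union> F) + marg h x (S \<union> F)"
    by (simp add: marg_def)
  ultimately show ?case using insert by simp
qed

lemma greedy_run_step:
  assumes "greedy_run V gain r S" "t < r"
  obtains e where "e \<in> V - S t" "\<And>e'. e' \<in> V - S t \<Longrightarrow> gain (S t) e' \<le> gain (S t) e"
    "S (Suc t) = insert e (S t)"
  using assms unfolding greedy_run_def by blast

lemma greedy_run_subset:
  assumes g: "greedy_run V gain r S" shows "t \<le> r \<Longrightarrow> S t \<subseteq> V"
proof (induction t)
  case 0 then show ?case using g by (simp add: greedy_run_def)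
next
  case (Suc t)
  then have "t < r" by simp
  then obtain e where "e \<in> V" "S (Suc t) = insert e (S t)"
    by (rule greedy_run_step[OF g]) blast
  with Suc show ?case by auto
qed

lemma greedy_run_mono:
  assumes g: "greedy_run V gain r S" shows "t \<le> t' \<Longrightarrow> t' \<le> r \<Longrightarrow> S t \<subseteq> S t'"
proof (induction t')
  case 0 then show ?case by simp
next
  case (Suc t')
  then have "t' < r" by simp
  then obtain e where "S (Suc t') = insert e (S t')"
    by (rule greedy_run_step[OF g])
  with Suc show ?case by (cases "t = Suc t'") auto
qed

lemma greedy_run_marg_le_gain:
  assumes g: "greedy_run V (\<lambda>X e. marg h e X) r S" and mo: "monotone_sf V h"
    and t: "t < r" and x: "x \<in> V"
  shows "marg h x (S t) \<le> h (S (Suc t)) - h (S t)"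
proof -
  obtain e where e: "e \<in> V - S t" "\<And>e'. e' \<in> V - S t \<Longrightarrow> marg h e' (S t) \<le> marg h e (S t)"
    and S_Suc: "S (Suc t) = insert e (S t)"
    using greedy_run_step[OF g t] by blast
  have gain: "h (S (Suc t)) - h (S t) = marg h e (S t)" using S_Suc by (simp add: marg_def)
  show ?thesis
  proof (cases "x \<in> S t")
    case True
    have "S t \<subseteq> V" using greedy_run_subset[OF g] t by simp
    then show ?thesis
      using True gain marg_nonneg[OF mo, of e] e(1) by (simp add: marg_def insert_absorb)
  next
    case False then show ?thesis using e x gain by auto
  qed
qed

lemma greedy_run_gain_nonneg:
  assumes g: "greedy_run V gain r S" and mo: "monotone_sf V h" and t: "t < r"
  shows "0 \<le> h (S (Suc t)) - h (S t)"
  using monotone_sfD[OF mo greedy_run_mono[OF g] greedy_run_subset[OF g]] t by simp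

lemma greedy_run_gap_le:
  assumes g: "greedy_run V (\<lambda>X e. marg h e X) r S" and mo: "monotone_sf V h"
    and sm: "submodular_sf V h" and fin: "finite V"
    and t: "t < r" and X: "X \<subseteq> V" "card X \<le> r"
  shows "h X - h (S t) \<le> real r * (h (S (Suc t)) - h (S t))"
proof -
  let ?g = "h (S (Suc t)) - h (S t)"
  have St: "S t \<subseteq> V" using greedy_run_subset[OF g] t by simp
  have "h X \<le> h (S t \<union> X)" using St X by (intro monotone_sfD[OF mo]) auto
  also have "\<dots> \<le> h (S t) + (\<Sum>x\<in>X. marg h x (S t))"
    using diff_union_le_sum_marg[OF mo sm finite_subset[OF X(1) fin] X(1) St] by simp
  also have "(\<Sum>x\<in>X. marg h x (S t)) \<le> real (card X) * ?g"
    using sum_mono[of X "\<lambda>x. marg h x (S t)" "\<lambda>_. ?g"] greedy_run_marg_le_gain[OF g mo t] X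
    by auto
  also have "\<dots> \<le> real r * ?g"
    using X greedy_run_gain_nonneg[OF g mo t] by (intro mult_right_mono) auto
  finally show ?thesis by simp
qed

lemma greedy_run_approx:
  assumes g: "greedy_run V (\<lambda>X e. marg h e X) r S" and mo: "monotone_sf V h"
    and sm: "submodular_sf V h" and fin: "finite V"
    and r: "0 < r" and X: "X \<subseteq> V" "card X \<le> r"
  shows "h X - h (S r) \<le> exp (-1) * (h X - h {})"
proof -
  define c where "c = 1 - 1 / real r"
  have c0: "0 \<le> c" using r by (simp add: c_def)
  have contract: "h X - h (S (Suc t)) \<le> c * (h X - h (S t))" if "t < r" for t
    using greedy_run_gap_le[OF g mo sm fin that X] r
    by (simp add: c_def field_simps)
  have geometric: "h X - h (S t) \<le> c ^ t * (h X - h {})" if "t \<le> r" for t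
    using that
  proof (induction t)
    case 0 then show ?case using g by (simp add: greedy_run_def)
  next
    case (Suc t)
    then have "h X - h (S (Suc t)) \<le> c * (h X - h (S t))" by (intro contract) simp
    also have "\<dots> \<le> c * (c ^ t * (h X - h {}))" using Suc c0 by (intro mult_left_mono) auto
    finally show ?case by (simp add: mult.assoc)
  qed
  have "c ^ r \<le> exp (-1)"
    using exp_ge_one_minus_x_over_n_power_n[of 1 r] r by (simp add: c_def)
  moreover have "0 \<le> h X - h {}" using monotone_sfD[OF mo _ X(1)] by simp
  ultimately have "c ^ r * (h X - h {}) \<le> exp (-1) * (h X - h {})" by (rule mult_right_mono)
  with geometric[of r] show ?thesis by simp
qed

lemma greedy_run_marg_le_average:
  assumes g: "greedy_run V (\<lambda>X e. marg h e X) r S" and mo: "monotone_sf V h"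
    and sm: "submodular_sf V h" and x: "x \<in> V"
  shows "real r * marg h x (S r) \<le> h (S r) - h {}"
proof -
  have "real r * marg h x (S r) = (\<Sum>t<r. marg h x (S r))" by simp
  also have "\<dots> \<le> (\<Sum>t<r. h (S (Suc t)) - h (S t))"
  proof (rule sum_mono)
    fix t assume "t \<in> {..<r}"
    then have t: "t < r" by simp
    have "marg h x (S r) \<le> marg h x (S t)"
      using t x greedy_run_subset[OF g] by (intro marg_antimono[OF mo sm greedy_run_mono[OF g]]) auto
    also have "\<dots> \<le> h (S (Suc t)) - h (S t)" by (rule greedy_run_marg_le_gain[OF g mo t x])
    finally show "marg h x (S r) \<le> h (S (Suc t)) - h (S t)" .
  qed
  also have "\<dots> = h (S r) - h {}"
    using sum_lessThan_telescope[of "\<lambda>t. h (S t)" r] g by (simp add: greedy_run_def)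
  finally show ?thesis .
qed

lemma greedy_run_union_gain_le:
  assumes g: "greedy_run V (\<lambda>X e. marg h e X) r S" and mo: "monotone_sf V h"
    and sm: "submodular_sf V h" and fin: "finite V"
    and X: "X \<subseteq> V" "card X \<le> r"
  shows "h (S r \<union> X) - h (S r) \<le> h (S r) - h {}"
proof -
  have Sr: "S r \<subseteq> V" using greedy_run_subset[OF g] by simp
  have "real r * (h (S r \<union> X) - h (S r)) \<le> real r * (\<Sum>x\<in>X. marg h x (S r))"
    using diff_union_le_sum_marg[OF mo sm finite_subset[OF X(1) fin] X(1) Sr]
    by (intro mult_left_mono) auto
  also have "\<dots> = (\<Sum>x\<in>X. real r * marg h x (S r))" by (simp add: sum_distrib_left)
  also have "\<dots> \<le> (\<Sum>x\<in>X. h (S r) - h {})"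
    using greedy_run_marg_le_average[OF g mo sm] X by (intro sum_mono) auto
  also have "\<dots> = real (card X) * (h (S r) - h {})" by simp
  also have "\<dots> \<le> real r * (h (S r) - h {})"
    using X monotone_sfD[OF mo _ Sr] by (intro mult_right_mono) auto
  finally show ?thesis
    using X(2) g mult_right_le_imp_le[of "real r"]
    by (cases "r = 0") (auto simp: finite_subset[OF X(1) fin] greedy_run_def)
qed

lemma union_le_union_add:
  assumes mo: "monotone_sf V h" and sm: "submodular_sf V h" and nn: "nonneg_sf V h"
    and sets: "T \<subseteq> V" "A \<subseteq> V" "U \<subseteq> V"
    and gain: "h (A \<union> U) - h A \<le> h A - h {}"
  shows "h (T \<union> U) \<le> h (T \<union> A) + h A"
proof -
  have "h (T \<union> U) \<le> h ((T \<union> A) \<union> (A \<union> U))"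
    using sets by (intro monotone_sfD[OF mo]) auto
  moreover have "h ((T \<union> A) \<union> (A \<union> U)) + h ((T \<union> A) \<inter> (A \<union> U)) \<le> h (T \<union> A) + h (A \<union> U)"
    using sets by (intro submodular_sfD[OF sm]) auto
  moreover have "h A \<le> h ((T \<union> A) \<inter> (A \<union> U))"
    using sets by (intro monotone_sfD[OF mo]) auto
  moreover have "0 \<le> h {}" using nn by (simp add: nonneg_sf_def)
  ultimately show ?thesis using gain by linarith
qed

lemma greedy_run_union_le:
  assumes g: "greedy_run V (\<lambda>X e. marg h e X) r S" and mo: "monotone_sf V h"
    and sm: "submodular_sf V h" and nn: "nonneg_sf V h" and fin: "finite V"
    and T: "T \<subseteq> V" and U: "U \<subseteq> V" "card U \<le> r"
  shows "h (T \<union> U) \<le> h (T \<union> S r) + h (S r)"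
  using greedy_run_subset[OF g] T U
  by (intro union_le_union_add[OF mo sm nn] greedy_run_union_gain_le[OF g mo sm fin]) auto

lemma OPT_le:
  assumes fin: "finite V"
    and bound: "\<And>T U i. T \<subseteq> V \<Longrightarrow> card T \<le> l \<Longrightarrow> U \<subseteq> V \<Longrightarrow> card U \<le> k - l \<Longrightarrow> i \<in> {1..m}
      \<Longrightarrow> f i (T \<union> U) \<le> b T i"
  obtains T where "T \<subseteq> V" "card T \<le> l" "OPT V m f k l \<le> (\<Sum>i=1..m. b T i)"
proof -
  define \<T> where "\<T> = {T. T \<subseteq> V \<and> card T \<le> l}"
  define \<U> where "\<U> = {U. U \<subseteq> V \<and> card U \<le> k - l}"
  have fin_\<T>: "finite \<T>" and fin_\<U>: "finite \<U>"
    using fin unfolding \<T>_def \<U>_def by (auto intro: finite_subset[of _ "Pow V"])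
  have "{} \<in> \<T>" "{} \<in> \<U>" unfolding \<T>_def \<U>_def by auto
  then have "OPT V m f k l \<in> (\<lambda>T. \<Sum>i=1..m. Max ((\<lambda>U. f i (T \<union> U)) ` \<U>)) ` \<T>"
    unfolding OPT_def \<T>_def[symmetric] \<U>_def[symmetric] using fin_\<T> by (intro Max_in) auto
  then obtain T where T: "T \<in> \<T>"
    and OPT_eq: "OPT V m f k l = (\<Sum>i=1..m. Max ((\<lambda>U. f i (T \<union> U)) ` \<U>))"
    by blast
  have "OPT V m f k l \<le> (\<Sum>i=1..m. b T i)"
    unfolding OPT_eq using T \<open>{} \<in> \<U>\<close> fin_\<U> bound
    by (intro sum_mono Max.boundedI) (auto simp: \<T>_def \<U>_def)
  with T show ?thesis using that unfolding \<T>_def by blast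
qed

lemma max_greedy_bound_le:
  fixes opt \<gamma> g g\<^sub>T :: real
  assumes "\<gamma> \<le> g" "g\<^sub>T - g \<le> exp (-1) * (g\<^sub>T - \<gamma>)" "opt \<le> g\<^sub>T + \<gamma>"
  shows "max \<gamma> ((1 - 1 / exp 1) * (opt - 2 * \<gamma>) + \<gamma>) \<le> g"
proof -
  have "(1 - 1 / exp 1) * (g\<^sub>T - \<gamma>) + \<gamma> \<le> g"
    using assms(2) by (simp add: exp_minus field_simps)
  moreover have "(1 - 1 / exp 1) * (opt - 2 * \<gamma>) \<le> (1 - 1 / exp 1) * (g\<^sub>T - \<gamma>)"
    using assms(3) by (intro mult_left_mono) auto
  ultimately have "(1 - 1 / exp 1) * (opt - 2 * \<gamma>) + \<gamma> \<le> g" by linarith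
  with assms(1) show ?thesis by (rule max.boundedI)
qed

lemma half_le_max_greedy_bound:
  fixes opt \<gamma> :: real
  shows "opt / 2 \<le> max \<gamma> ((1 - 1 / exp 1) * (opt - 2 * \<gamma>) + \<gamma>)"
proof (cases "opt \<le> 2 * \<gamma>")
  case False
  define c where "c = 1 - 1 / exp (1::real)"
  have "1 / 2 \<le> c"
    using exp_ge_add_one_self[of 1] by (simp add: c_def field_simps)
  then have "1 / 2 * (opt - 2 * \<gamma>) \<le> c * (opt - 2 * \<gamma>)"
    using False by (intro mult_right_mono) auto
  then have "opt / 2 \<le> c * (opt - 2 * \<gamma>) + \<gamma>" by simp
  then show ?thesis unfolding c_def by (rule max.coboundedI2)
next
  case True
  then show ?thesis by (intro max.coboundedI1) simp
qed

theorem proposition2: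
  fixes V :: "'a set" and n m k l :: nat and f :: "nat \<Rightarrow> 'a set \<Rightarrow> real"
    and S :: "nat \<Rightarrow> nat \<Rightarrow> 'a set" and Str :: "nat \<Rightarrow> 'a set"
  assumes finV: "finite V" and cardV: "card V = n"
    and kl: "1 \<le> l" "l < k" "k \<le> n" and m: "1 \<le> m"
    and nonneg: "\<forall>i\<in>{1..m}. nonneg_sf V (f i)"
    and mono: "\<forall>i\<in>{1..m}. monotone_sf V (f i)"
    and submod: "\<forall>i\<in>{1..m}. submodular_sf V (f i)"
    and phase1: "\<forall>i\<in>{1..m}. greedy_run V (\<lambda>X e. marg (f i) e X) (k - l) (S i)"
    and phase2: "greedy_run V (\<lambda>X e. \<Sum>i=1..m. marg (f i) e (X \<union> S i (k - l))) l Str"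
  shows "(\<Sum>i=1..m. f i (Str l \<union> S i (k - l))) \<ge>
           max (\<Sum>i=1..m. f i (S i (k - l)))
               ((1 - 1 / exp 1) * (OPT V m f k l - 2 * (\<Sum>i=1..m. f i (S i (k - l))))
                 + (\<Sum>i=1..m. f i (S i (k - l))))
       \<and> (\<Sum>i=1..m. f i (Str l \<union> S i (k - l))) \<ge> OPT V m f k l / 2"
proof -
  define G where "G T = (\<Sum>i=1..m. f i (T \<union> S i (k - l)))" for T
  define \<gamma> where "\<gamma> = (\<Sum>i=1..m. f i (S i (k - l)))"
  have S_sub: "S i (k - l) \<subseteq> V" if "i \<in> {1..m}" for i
    using greedy_run_subset[OF phase1[rule_format, OF that]] by simp
  have G_mono: "monotone_sf V G" unfolding G_def
    using mono S_sub by (intro monotone_sf_sum monotone_sf_union_const) auto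
  have G_submod: "submodular_sf V G" unfolding G_def
    using submod S_sub by (intro submodular_sf_sum submodular_sf_union_const) auto
  have greedy_G: "greedy_run V (\<lambda>X e. marg G e X) l Str"
    using phase2 by (simp add: G_def marg_def sum_subtractf)
  have "G {} = \<gamma>" by (simp add: G_def \<gamma>_def)
  then have lower: "\<gamma> \<le> G (Str l)"
    using monotone_sfD[OF G_mono empty_subsetI greedy_run_subset[OF greedy_G order_refl]] by simp
  obtain T where T: "T \<subseteq> V" "card T \<le> l"
    and "OPT V m f k l \<le> (\<Sum>i=1..m. f i (T \<union> S i (k - l)) + f i (S i (k - l)))"
    by (rule OPT_le[OF finV, of l k m f "\<lambda>T i. f i (T \<union> S i (k - l)) + f i (S i (k - l))"])
      (use mono submod nonneg phase1 in \<open>auto intro: greedy_run_union_le[OF _ _ _ _ finV]\<close>)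
  then have "OPT V m f k l \<le> G T + \<gamma>" by (simp add: G_def \<gamma>_def sum.distrib)
  moreover have "G T - G (Str l) \<le> exp (-1) * (G T - \<gamma>)"
    using greedy_run_approx[OF greedy_G G_mono G_submod finV _ T] kl \<open>G {} = \<gamma>\<close> by simp
  ultimately have "max \<gamma> ((1 - 1 / exp 1) * (OPT V m f k l - 2 * \<gamma>) + \<gamma>) \<le> G (Str l)"
    using lower by (intro max_greedy_bound_le)
  then show ?thesis
    using half_le_max_greedy_bound[of "OPT V m f k l" \<gamma>] unfolding G_def \<gamma>_def by linarith
qed

end
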